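(* Consider $n$ scalar states $x_i(t)\in\mathbb{R}$, $t\in\mathbb{Z}_{\ge0}$, updated synchronously by $$x_i(t+1)=x_i(t)+\frac{1}{1+n_i}\sum_{j\in\mathcal{N}_i}\big(x_j(t-T_{ji})-x_i(t)\big),\qquad i=1,\dots,n,$$ where the neighbor sets $\mathcal{N}_i$ are fixed, the neighbor relation is symmetric ($j\in\mathcal{N}_i\iff i\in\mathcal{N}_j$), the resulting undirected graph is connected, $n_i=|\mathcal{N}_i|\ge1$, and the delays $T_{ji}\in\mathbb{Z}_{\ge0}$ are constant (possibly different for different links and for the two directions of a link), with arbitrary initial values $x_i(s)$ for $s\le 0$. Then, regardless of the values of the delays, $x_i(t)-x_j(t)\to0$ as $t\to\infty$ for all $i,j$. *)

theory Defs
  imports "HOL-Analysis.Analysis"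
begin

end

theory Submission
  imports Defs
begin

(* Call U a window upper bound at time t if x_i(s) <= U for all i and t - B <= s <= t, where B
   bounds the delays: these are all the past values the dynamics can still read.  Each update is a
   convex combination, with weights at least 1/(n+1), of x_i(t) and delayed neighbour values, so a
   window upper bound persists, and a gap U - x_i(t) >= d at a single node spreads along the graph,
   losing a factor (1/(n+1))^(B+1) per edge, to every node and every time of the window after
   diam * (B+1) + B steps.  Since the dynamics commutes with x |-> -x, the same holds for lower
   bounds; applying the spreading to node 0 and to whichever of the two bounds is farther from
   x_0(t) shrinks the spread between the window bounds by a fixed factor < 1 per period. *)

definition diameter :: "('a \<Rightarrow> 'a \<Rightarrow> bool) \<Rightarrow> 'a set \<Rightarrow> nat" where
  "diameter R A = Max ((\<lambda>(i, j). LEAST k. (R ^^ k) i j) ` (A \<times> A))"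

lemma relpowp_le_diameter:
  assumes "finite A" and conn: "\<And>i j. i \<in> A \<Longrightarrow> j \<in> A \<Longrightarrow> R\<^sup>*\<^sup>* i j"
    and "i \<in> A" "j \<in> A"
  shows "\<exists>k \<le> diameter R A. (R ^^ k) i j"
proof -
  obtain k0 where "(R ^^ k0) i j"
    using rtranclp_imp_relpowp[OF conn[OF assms(3,4)]] by blast
  then have "(R ^^ (LEAST k. (R ^^ k) i j)) i j" by (rule LeastI)
  moreover have "(LEAST k. (R ^^ k) i j) \<le> diameter R A"
    unfolding diameter_def using assms by (intro Max_ge) force+
  ultimately show ?thesis by blast
qed

lemma LIMSEQ_zero_if_eventually_bounded:
  fixes f :: "nat \<Rightarrow> real"
  assumes bounded: "\<And>k. eventually (\<lambda>t. \<bar>f t\<bar> \<le> g k) sequentially" and "g \<longlonglongrightarrow> 0"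
  shows "f \<longlonglongrightarrow> 0"
proof (rule LIMSEQ_I)
  fix r :: real assume "0 < r"
  from LIMSEQ_D[OF \<open>g \<longlonglongrightarrow> 0\<close> this] obtain k where "norm (g k - 0) < r" by blast
  then have "g k < r" by simp
  with bounded[of k] show "\<exists>t0. \<forall>t\<ge>t0. norm (f t - 0) < r"
    unfolding eventually_sequentially by fastforce
qed

locale delayed_consensus =
  fixes n :: nat and N :: "nat \<Rightarrow> nat set" and T :: "nat \<Rightarrow> nat \<Rightarrow> nat"
    and B :: nat and x :: "nat \<Rightarrow> int \<Rightarrow> real"
  assumes N_range: "\<And>i. i < n \<Longrightarrow> N i \<subseteq> {..<n}"
    and N_sym: "\<And>i j. i < n \<Longrightarrow> j < n \<Longrightarrow> (j \<in> N i \<longleftrightarrow> i \<in> N j)"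
    and N_conn: "\<And>i j. i < n \<Longrightarrow> j < n \<Longrightarrow> (\<lambda>a b. b \<in> N a)\<^sup>*\<^sup>* i j"
    and delay_bound: "\<And>i j. i < n \<Longrightarrow> j \<in> N i \<Longrightarrow> T j i \<le> B"
    and update: "\<And>i t. i < n \<Longrightarrow>
        x i (int t + 1) = x i (int t) +
          (1 / (1 + real (card (N i)))) *
            (\<Sum>j\<in>N i. x j (int t - int (T j i)) - x i (int t))"
begin

definition min_weight :: real where
  "min_weight = 1 / (real n + 1)"

definition window_upper_bound :: "real \<Rightarrow> nat \<Rightarrow> bool" where
  "window_upper_bound U t \<longleftrightarrow> (\<forall>i<n. \<forall>s \<in> {int t - int B..int t}. x i s \<le> U)"

definition horizon :: nat where
  "horizon = diameter (\<lambda>a b. b \<in> N a) {..<n} * (B + 1) + B"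

lemma min_weight_pos: "0 < min_weight"
  and min_weight_le_one: "min_weight \<le> 1"
  by (auto simp: min_weight_def)

lemma min_weight_le_update_weight:
  assumes "i < n"
  shows "min_weight \<le> 1 / (1 + real (card (N i)))"
proof -
  have "card (N i) \<le> n" using card_mono[OF _ N_range[OF assms]] by simp
  then show ?thesis by (simp add: min_weight_def field_simps)
qed

lemma negated: "delayed_consensus n N T B (\<lambda>i s. - x i s)"
proof
  fix i t assume "i < n"
  have "(\<Sum>j\<in>N i. - x j (int t - int (T j i)) - - x i (int t))
      = - (\<Sum>j\<in>N i. x j (int t - int (T j i)) - x i (int t))"
    by (simp add: sum_negf[symmetric])
  with update[OF \<open>i < n\<close>] show "- x i (int t + 1) = - x i (int t) +
      1 / (1 + real (card (N i))) * (\<Sum>j\<in>N i. - x j (int t - int (T j i)) - - x i (int t))"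
    by simp
qed (use N_range N_sym N_conn delay_bound in auto)

lemma ex_window_upper_bound: "\<exists>U. window_upper_bound U t"
proof -
  have "finite ((\<lambda>(i, s). x i s) ` ({..<n} \<times> {int t - int B..int t}))" by simp
  then obtain U where "\<forall>v \<in> (\<lambda>(i, s). x i s) ` ({..<n} \<times> {int t - int B..int t}). v \<le> U"
    using bdd_above_finite unfolding bdd_above_def by blast
  then show ?thesis unfolding window_upper_bound_def by auto
qed

lemma update_gap:
  assumes "i < n"
  shows "U - x i (int t + 1) = (1 / (1 + real (card (N i)))) *
     ((U - x i (int t)) + (\<Sum>j\<in>N i. U - x j (int t - int (T j i))))"
proof -
  define c where "c = real (card (N i))"
  define S where "S = (\<Sum>j\<in>N i. x j (int t - int (T j i)))"
  have "(\<Sum>j\<in>N i. x j (int t - int (T j i)) - x i (int t)) = S - c * x i (int t)"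
    and "(\<Sum>j\<in>N i. U - x j (int t - int (T j i))) = c * U - S"
    unfolding S_def c_def by (simp_all add: sum_subtractf)
  moreover have "c \<ge> 0" unfolding c_def by simp
  ultimately show ?thesis
    unfolding update[OF assms] c_def[symmetric] by (simp add: field_simps)
qed

lemma window_gap_nonneg:
  assumes "window_upper_bound U t" "i < n" "int t - int B \<le> s" "s \<le> int t"
  shows "0 \<le> U - x i s"
  using assms unfolding window_upper_bound_def by auto

lemma delayed_gap_nonneg:
  assumes ub: "window_upper_bound U t" and i: "i < n" and j: "j \<in> N i"
  shows "0 \<le> U - x j (int t - int (T j i))"
  using window_gap_nonneg[OF ub] N_range[OF i] j delay_bound[OF i j] by auto

lemma gap_step_self:
  assumes ub: "window_upper_bound U t" and i: "i < n"
  shows "min_weight * (U - x i (int t)) \<le> U - x i (int t + 1)"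
proof -
  let ?a = "1 / (1 + real (card (N i)))"
  let ?S = "\<Sum>j\<in>N i. U - x j (int t - int (T j i))"
  have "0 \<le> U - x i (int t)" by (rule window_gap_nonneg[OF ub i]) simp_all
  then have "min_weight * (U - x i (int t)) \<le> ?a * (U - x i (int t))"
    using min_weight_le_update_weight[OF i] by (rule mult_right_mono[rotated])
  also have "\<dots> \<le> ?a * ((U - x i (int t)) + ?S)"
    using delayed_gap_nonneg[OF ub i] by (intro mult_left_mono add_increasing2 sum_nonneg) auto
  finally show ?thesis unfolding update_gap[OF i] .
qed

lemma gap_step_neighbour:
  assumes ub: "window_upper_bound U t" and i: "i < n" and j: "j \<in> N i"
  shows "min_weight * (U - x j (int t - int (T j i))) \<le> U - x i (int t + 1)"
proof -
  let ?a = "1 / (1 + real (card (N i)))"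
  let ?g = "\<lambda>j. U - x j (int t - int (T j i))"
  have "min_weight * ?g j \<le> ?a * ?g j"
    using delayed_gap_nonneg[OF ub i j] min_weight_le_update_weight[OF i]
    by (rule mult_right_mono[rotated])
  also have "\<dots> \<le> ?a * ((U - x i (int t)) + sum ?g (N i))"
  proof (intro mult_left_mono add_increasing)
    show "0 \<le> U - x i (int t)" by (rule window_gap_nonneg[OF ub i]) simp_all
    show "?g j \<le> sum ?g (N i)"
      using delayed_gap_nonneg[OF ub i] N_range[OF i] j
      by (intro member_le_sum) (auto intro: finite_subset)
  qed simp
  finally show ?thesis unfolding update_gap[OF i] .
qed

lemma window_upper_bound_Suc:
  assumes ub: "window_upper_bound U t"
  shows "window_upper_bound U (Suc t)"
  unfolding window_upper_bound_def
proof (intro allI impI ballI)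
  fix i s assume i: "i < n" and s: "s \<in> {int (Suc t) - int B..int (Suc t)}"
  show "x i s \<le> U"
  proof (cases "s = int t + 1")
    case True
    have "0 \<le> U - x i (int t)" by (rule window_gap_nonneg[OF ub i]) simp_all
    with gap_step_self[OF ub i] min_weight_pos have "0 \<le> U - x i (int t + 1)"
      by (meson mult_nonneg_nonneg less_imp_le order_trans)
    with True show ?thesis by simp
  next
    case False
    with s show ?thesis using window_gap_nonneg[OF ub i, of s] by auto
  qed
qed

lemma window_upper_bound_mono:
  "window_upper_bound U t \<Longrightarrow> t \<le> t' \<Longrightarrow> window_upper_bound U t'"
  by (induction t') (auto intro: window_upper_bound_Suc simp: le_Suc_eq)

lemma gap_decay:
  assumes ub: "window_upper_bound U t" and i: "i < n"
  shows "min_weight ^ k * (U - x i (int t)) \<le> U - x i (int (t + k))"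
proof (induction k)
  case (Suc k)
  have "min_weight ^ Suc k * (U - x i (int t)) = min_weight * (min_weight ^ k * (U - x i (int t)))"
    by simp
  also have "\<dots> \<le> min_weight * (U - x i (int (t + k)))"
    using Suc min_weight_pos by (intro mult_left_mono) auto
  also have "\<dots> \<le> U - x i (int (t + k) + 1)"
    using window_upper_bound_mono[OF ub, of "t + k"] i by (intro gap_step_self) auto
  finally show ?case by (simp add: add.commute)
qed simp

lemma gap_neighbour:
  assumes ub: "window_upper_bound U t" and i: "i < n" and j: "j \<in> N i"
  shows "min_weight ^ (B + 1) * (U - x j (int t)) \<le> U - x i (int (t + B + 1))"
proof -
  have TB: "T j i \<le> B" by (rule delay_bound[OF i j])
  have "0 \<le> U - x j (int t)"
    using window_gap_nonneg[OF ub] N_range[OF i] j by auto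
  then have "min_weight ^ (B + 1) * (U - x j (int t))
      \<le> min_weight ^ (B - T j i) * (min_weight * (U - x j (int t)))"
    using TB min_weight_pos min_weight_le_one
    by (simp add: mult.assoc[symmetric] power_Suc2[symmetric] mult_right_mono power_decreasing)
  also have "\<dots> \<le> min_weight ^ (B - T j i) * (U - x i (int (t + T j i + 1)))"
    using gap_step_neighbour[OF window_upper_bound_mono[OF ub, of "t + T j i"] i j] min_weight_pos
    by (intro mult_left_mono) (auto simp: add.commute add.left_commute)
  also have "\<dots> \<le> U - x i (int (t + T j i + 1 + (B - T j i)))"
    using window_upper_bound_mono[OF ub, of "t + T j i + 1"] i by (intro gap_decay) auto
  finally show ?thesis using TB by simp
qed

lemma relpowp_neighbour_less:
  "((\<lambda>a b. b \<in> N a) ^^ k) j i \<Longrightarrow> j < n \<Longrightarrow> i < n"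
proof (induction k arbitrary: i)
  case (Suc k)
  then obtain b where "((\<lambda>a b. b \<in> N a) ^^ k) j b" "i \<in> N b" by (auto elim: relpowp_Suc_E)
  with Suc.IH Suc.prems(2) N_range show ?case by blast
qed simp

lemma gap_along_path:
  assumes ub: "window_upper_bound U t" and j: "j < n"
  shows "((\<lambda>a b. b \<in> N a) ^^ k) j i \<Longrightarrow>
    min_weight ^ (k * (B + 1)) * (U - x j (int t)) \<le> U - x i (int (t + k * (B + 1)))"
proof (induction k arbitrary: i)
  case (Suc k)
  then obtain b where path: "((\<lambda>a b. b \<in> N a) ^^ k) j b" and "i \<in> N b"
    by (auto elim: relpowp_Suc_E)
  have "b < n" by (rule relpowp_neighbour_less[OF path j])
  with \<open>i \<in> N b\<close> have "i < n" and "b \<in> N i" using N_range N_sym by blast+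
  have "min_weight ^ (Suc k * (B + 1)) * (U - x j (int t))
      = min_weight ^ (B + 1) * (min_weight ^ (k * (B + 1)) * (U - x j (int t)))"
    by (simp add: power_add mult_ac)
  also have "\<dots> \<le> min_weight ^ (B + 1) * (U - x b (int (t + k * (B + 1))))"
    using Suc.IH[OF path] min_weight_pos by (intro mult_left_mono) auto
  also have "\<dots> \<le> U - x i (int (t + k * (B + 1) + B + 1))"
    using window_upper_bound_mono[OF ub] \<open>i < n\<close> \<open>b \<in> N i\<close> by (intro gap_neighbour) auto
  also have "t + k * (B + 1) + B + 1 = t + Suc k * (B + 1)" by simp
  finally show ?case .
qed simp

lemma window_upper_bound_contracts:
  assumes ub: "window_upper_bound U t" and i0: "i0 < n"
  shows "window_upper_bound (U - min_weight ^ horizon * (U - x i0 (int t))) (t + horizon)"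
  unfolding window_upper_bound_def
proof (intro allI impI ballI)
  fix i s assume i: "i < n" and s: "s \<in> {int (t + horizon) - int B..int (t + horizon)}"
  define D where "D = diameter (\<lambda>a b. b \<in> N a) {..<n}"
  define r where "r = nat (s - int (t + D * (B + 1)))"
  have "int (t + D * (B + 1)) \<le> s" "s \<le> int (t + D * (B + 1)) + int B"
    using s by (simp_all add: horizon_def D_def)
  then have "r \<le> B" and s_eq: "s = int (t + D * (B + 1) + r)"
    unfolding r_def by linarith+
  have "\<exists>k \<le> D. ((\<lambda>a b. b \<in> N a) ^^ k) i0 i"
    unfolding D_def by (rule relpowp_le_diameter) (use N_conn i0 i in auto)
  then obtain k where "k \<le> D" and path: "((\<lambda>a b. b \<in> N a) ^^ k) i0 i" by blast
  obtain d where "D = k + d" using \<open>k \<le> D\<close> le_Suc_ex by blast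
  define m where "m = d * (B + 1) + r"
  have km: "k * (B + 1) + m = D * (B + 1) + r" unfolding m_def \<open>D = k + d\<close> by algebra
  have "min_weight ^ horizon \<le> min_weight ^ (k * (B + 1) + m)"
    unfolding km horizon_def D_def[symmetric]
    by (rule power_decreasing) (use \<open>r \<le> B\<close> min_weight_pos min_weight_le_one in auto)
  moreover have "0 \<le> U - x i0 (int t)" by (rule window_gap_nonneg[OF ub i0]) simp_all
  ultimately have "min_weight ^ horizon * (U - x i0 (int t))
      \<le> min_weight ^ (k * (B + 1) + m) * (U - x i0 (int t))"
    by (rule mult_right_mono)
  also have "\<dots> = min_weight ^ m * (min_weight ^ (k * (B + 1)) * (U - x i0 (int t)))"
    by (simp add: power_add mult_ac)
  also have "\<dots> \<le> min_weight ^ m * (U - x i (int (t + k * (B + 1))))"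
    using gap_along_path[OF ub i0 path] min_weight_pos by (intro mult_left_mono) auto
  also have "\<dots> \<le> U - x i s"
    using gap_decay[OF window_upper_bound_mono[OF ub le_add1[of t "k * (B + 1)"]] i, of m]
    unfolding s_eq add.assoc km .
  finally show "x i s \<le> U - min_weight ^ horizon * (U - x i0 (int t))" by simp
qed

definition window_lower_bound :: "real \<Rightarrow> nat \<Rightarrow> bool" where
  "window_lower_bound W t \<longleftrightarrow> (\<forall>i<n. \<forall>s \<in> {int t - int B..int t}. W \<le> x i s)"

lemma window_lower_bound_iff:
  "window_lower_bound W t \<longleftrightarrow>
    delayed_consensus.window_upper_bound n B (\<lambda>i s. - x i s) (- W) t"
  unfolding window_lower_bound_def delayed_consensus.window_upper_bound_def[OF negated] by simp

lemma ex_window_lower_bound: "\<exists>W. window_lower_bound W t"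
proof -
  interpret neg: delayed_consensus n N T B "\<lambda>i s. - x i s" by (rule negated)
  obtain U where "neg.window_upper_bound U t" using neg.ex_window_upper_bound by blast
  then show ?thesis unfolding window_lower_bound_iff by (metis minus_minus)
qed

lemma window_lower_bound_mono:
  "window_lower_bound W t \<Longrightarrow> t \<le> t' \<Longrightarrow> window_lower_bound W t'"
proof -
  interpret neg: delayed_consensus n N T B "\<lambda>i s. - x i s" by (rule negated)
  show "window_lower_bound W t \<Longrightarrow> t \<le> t' \<Longrightarrow> window_lower_bound W t'"
    unfolding window_lower_bound_iff by (rule neg.window_upper_bound_mono)
qed

lemma window_lower_bound_contracts:
  assumes "window_lower_bound W t" and "i0 < n"
  shows "window_lower_bound (W + min_weight ^ horizon * (x i0 (int t) - W)) (t + horizon)"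
proof -
  interpret neg: delayed_consensus n N T B "\<lambda>i s. - x i s" by (rule negated)
  from assms show ?thesis
    unfolding window_lower_bound_iff using neg.window_upper_bound_contracts
    by (fastforce simp: algebra_simps)
qed

lemma window_spread_contracts:
  assumes ub: "window_upper_bound U t" and lb: "window_lower_bound W t" and "0 < n"
  shows "\<exists>U' W'. window_upper_bound U' (t + horizon) \<and> window_lower_bound W' (t + horizon) \<and>
    U' - W' \<le> (1 - min_weight ^ horizon / 2) * (U - W)"
proof -
  let ?a = "min_weight ^ horizon"
  have half: "(1 - ?a / 2) * (U - W) = (U - W) - ?a * ((U - W) / 2)"
    by (simp add: field_simps)
  have "0 \<le> ?a" using min_weight_pos by simp
  show ?thesis
  proof (cases "x 0 (int t) \<le> (U + W) / 2")
    case True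
    then have "?a * ((U - W) / 2) \<le> ?a * (U - x 0 (int t))"
      using \<open>0 \<le> ?a\<close> by (intro mult_left_mono) auto
    then have "U - ?a * (U - x 0 (int t)) - W \<le> (1 - ?a / 2) * (U - W)"
      unfolding half by linarith
    with window_upper_bound_contracts[OF ub \<open>0 < n\<close>] window_lower_bound_mono[OF lb le_add1]
    show ?thesis by blast
  next
    case False
    then have "?a * ((U - W) / 2) \<le> ?a * (x 0 (int t) - W)"
      using \<open>0 \<le> ?a\<close> by (intro mult_left_mono) auto
    then have "U - (W + ?a * (x 0 (int t) - W)) \<le> (1 - ?a / 2) * (U - W)"
      unfolding half by linarith
    with window_lower_bound_contracts[OF lb \<open>0 < n\<close>] window_upper_bound_mono[OF ub le_add1]
    show ?thesis by blast
  qed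
qed

lemma contraction_factor_bounds:
  "0 \<le> 1 - min_weight ^ horizon / 2" "1 - min_weight ^ horizon / 2 < 1"
  using min_weight_pos min_weight_le_one power_le_one[of min_weight horizon] by auto

lemma window_spread_geometric:
  assumes ub: "window_upper_bound U\<^sub>0 0" and lb: "window_lower_bound W\<^sub>0 0" and "0 < n"
  shows "\<exists>U W. window_upper_bound U (k * horizon) \<and> window_lower_bound W (k * horizon) \<and>
    U - W \<le> (1 - min_weight ^ horizon / 2) ^ k * (U\<^sub>0 - W\<^sub>0)"
proof (induction k)
  case 0
  with ub lb show ?case by auto
next
  case (Suc k)
  let ?c = "1 - min_weight ^ horizon / 2"
  from Suc.IH obtain U W where ub: "window_upper_bound U (k * horizon)"
    and lb: "window_lower_bound W (k * horizon)" and spread: "U - W \<le> ?c ^ k * (U\<^sub>0 - W\<^sub>0)"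
    by blast
  obtain U' W' where "window_upper_bound U' (Suc k * horizon)" "window_lower_bound W' (Suc k * horizon)"
    and "U' - W' \<le> ?c * (U - W)"
    using window_spread_contracts[OF ub lb \<open>0 < n\<close>] by (auto simp: add.commute)
  moreover have "?c * (U - W) \<le> ?c * (?c ^ k * (U\<^sub>0 - W\<^sub>0))"
    using spread contraction_factor_bounds by (intro mult_left_mono) auto
  ultimately show ?case by fastforce
qed

theorem consensus:
  assumes "i < n" "j < n"
  shows "(\<lambda>t. x i (int t) - x j (int t)) \<longlonglongrightarrow> 0"
proof -
  let ?c = "1 - min_weight ^ horizon / 2"
  obtain U\<^sub>0 W\<^sub>0 where ub: "window_upper_bound U\<^sub>0 0" and lb: "window_lower_bound W\<^sub>0 0"
    using ex_window_upper_bound ex_window_lower_bound by blast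
  have "eventually (\<lambda>t. \<bar>x i (int t) - x j (int t)\<bar> \<le> ?c ^ k * (U\<^sub>0 - W\<^sub>0)) sequentially" for k
  proof -
    have "0 < n" using assms by simp
    with window_spread_geometric[OF ub lb] obtain U W where ub: "window_upper_bound U (k * horizon)"
      and lb: "window_lower_bound W (k * horizon)" and spread: "U - W \<le> ?c ^ k * (U\<^sub>0 - W\<^sub>0)"
      by blast
    have "\<bar>x i (int t) - x j (int t)\<bar> \<le> ?c ^ k * (U\<^sub>0 - W\<^sub>0)" if "k * horizon \<le> t" for t
    proof -
      have "window_upper_bound U t" "window_lower_bound W t"
        using window_upper_bound_mono[OF ub that] window_lower_bound_mono[OF lb that] .
      then have "x i (int t) \<le> U" "x j (int t) \<le> U" "W \<le> x i (int t)" "W \<le> x j (int t)"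
        using assms unfolding window_upper_bound_def window_lower_bound_def by auto
      with spread show ?thesis by arith
    qed
    then show ?thesis unfolding eventually_sequentially by blast
  qed
  moreover have "(\<lambda>k. ?c ^ k * (U\<^sub>0 - W\<^sub>0)) \<longlonglongrightarrow> 0"
    using contraction_factor_bounds by (intro tendsto_mult_left_zero LIMSEQ_power_zero) auto
  ultimately show ?thesis by (rule LIMSEQ_zero_if_eventually_bounded)
qed

end

theorem theorem5:
  fixes n :: nat
    and N :: "nat \<Rightarrow> nat set"
    and T :: "nat \<Rightarrow> nat \<Rightarrow> nat"
    and x :: "nat \<Rightarrow> int \<Rightarrow> real"
  assumes N_range: "\<And>i. i < n \<Longrightarrow> N i \<subseteq> {..<n}"
    and N_irrefl: "\<And>i. i < n \<Longrightarrow> i \<notin> N i"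
    and N_sym: "\<And>i j. i < n \<Longrightarrow> j < n \<Longrightarrow> (j \<in> N i \<longleftrightarrow> i \<in> N j)"
    and N_conn: "\<And>i j. i < n \<Longrightarrow> j < n \<Longrightarrow> (\<lambda>a b. b \<in> N a)\<^sup>*\<^sup>* i j"
    and N_card: "\<And>i. i < n \<Longrightarrow> card (N i) \<ge> 1"
    and update: "\<And>i t. i < n \<Longrightarrow>
        x i (int t + 1) = x i (int t) +
          (1 / (1 + real (card (N i)))) *
            (\<Sum>j\<in>N i. x j (int t - int (T j i)) - x i (int t))"
  shows "\<And>i j. i < n \<Longrightarrow> j < n \<Longrightarrow>
           (\<lambda>t::nat. x i (int t) - x j (int t)) \<longlonglongrightarrow> 0"
proof -
  define B where "B = (\<Sum>i<n. \<Sum>j<n. T j i)"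
  have "T j i \<le> B" if "i < n" "j \<in> N i" for i j
  proof -
    have "T j i \<le> (\<Sum>j<n. T j i)"
      using N_range[OF \<open>i < n\<close>] \<open>j \<in> N i\<close> by (intro member_le_sum) auto
    also have "\<dots> \<le> B" unfolding B_def using \<open>i < n\<close> by (intro member_le_sum) auto
    finally show ?thesis .
  qed
  then interpret delayed_consensus n N T B x
    using N_range N_sym N_conn update by unfold_locales
  show "\<And>i j. i < n \<Longrightarrow> j < n \<Longrightarrow> (\<lambda>t. x i (int t) - x j (int t)) \<longlonglongrightarrow> 0"
    by (rule consensus)
qed

end
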